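(* Suppose $G$ admits a presentation $\langle Z\mid S\rangle$ with all relators of length at most $M$ and satisfying a linear isoperimetric inequality with constant $L$. Then for every $K$ there exist $r$ and $0<\epsilon\le1$ such that the following holds: if $p$ is a geodesic in $\Gamma(G,Z)$, $p_0$ is a subpath of $p$ with $\ell(p_0)>2r$, and $q$ is a path in $\Gamma(G,Z)$ with the same endpoints as $p$ and $\ell(q)\le K\ell(p_0)$, then at least $\epsilon\ell(p_0)$ vertices of $p_0$ lie at distance at most $r$ from points of $q$.
   Context: $\Gamma(G,Z)$ is the Cayley graph with respect to the generating set $Z$ (closed under inverses), with its path metric. The linear isoperimetric inequality with constant $L$ means that every word over $Z$ representing the identity of length $n$ is a product of at most $Ln$ conjugates of relators and their inverses. *)

theory Defs
  imports Complex_Main "HOL-Algebra.Generated_Groups"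
begin

definition word_eval :: "('g, 'b) monoid_scheme \<Rightarrow> 'g list \<Rightarrow> 'g" where
  "word_eval G w = foldr (\<lambda>x y. x \<otimes>\<^bsub>G\<^esub> y) w \<one>\<^bsub>G\<^esub>"

definition inv_word :: "('g, 'b) monoid_scheme \<Rightarrow> 'g list \<Rightarrow> 'g list" where
  "inv_word G w = rev (map (\<lambda>x. inv\<^bsub>G\<^esub> x) w)"

inductive free_red :: "('g, 'b) monoid_scheme \<Rightarrow> 'g set \<Rightarrow> 'g list \<Rightarrow> 'g list \<Rightarrow> bool"
  for G Z where
  "z \<in> Z \<Longrightarrow> free_red G Z (xs @ [z, inv\<^bsub>G\<^esub> z] @ ys) (xs @ ys)"

text \<open>Equality in the free group on Z (with the involution z \<mapsto> z^-1).\<close>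
definition free_eq :: "('g, 'b) monoid_scheme \<Rightarrow> 'g set \<Rightarrow> 'g list \<Rightarrow> 'g list \<Rightarrow> bool" where
  "free_eq G Z = (symclp (free_red G Z))\<^sup>*\<^sup>*"

definition conj_factor :: "('g, 'b) monoid_scheme \<Rightarrow> 'g list \<times> 'g list \<times> bool \<Rightarrow> 'g list" where
  "conj_factor G f = (case f of (u, r, e) \<Rightarrow>
      u @ (if e then r else inv_word G r) @ inv_word G u)"

definition linear_isoperimetric ::
  "('g, 'b) monoid_scheme \<Rightarrow> 'g set \<Rightarrow> 'g list set \<Rightarrow> real \<Rightarrow> bool" where
  "linear_isoperimetric G Z S L \<longleftrightarrow>
     (\<forall>w. set w \<subseteq> Z \<and> word_eval G w = \<one>\<^bsub>G\<^esub> \<longrightarrow>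
        (\<exists>fs. (\<forall>(u, r, e) \<in> set fs. set u \<subseteq> Z \<and> r \<in> S) \<and>
              real (length fs) \<le> L * real (length w) \<and>
              free_eq G Z w (concat (map (conj_factor G) fs))))"

definition cay_dist :: "('g, 'b) monoid_scheme \<Rightarrow> 'g set \<Rightarrow> 'g \<Rightarrow> 'g \<Rightarrow> nat" where
  "cay_dist G Z g h = (LEAST n. \<exists>w. set w \<subseteq> Z \<and> length w = n \<and> g \<otimes>\<^bsub>G\<^esub> word_eval G w = h)"

text \<open>A (combinatorial) path in the Cayley graph, given by its list of vertices;
  its length is the number of edges, i.e. length of the list minus one.\<close>
definition cay_path :: "('g, 'b) monoid_scheme \<Rightarrow> 'g set \<Rightarrow> 'g list \<Rightarrow> bool" where
  "cay_path G Z vs \<longleftrightarrow> vs \<noteq> [] \<and> set vs \<subseteq> carrier G \<and>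
     (\<forall>i. Suc i < length vs \<longrightarrow> inv\<^bsub>G\<^esub> (vs ! i) \<otimes>\<^bsub>G\<^esub> (vs ! Suc i) \<in> Z)"

definition path_len :: "'g list \<Rightarrow> nat" where
  "path_len vs = length vs - 1"

definition cay_geodesic :: "('g, 'b) monoid_scheme \<Rightarrow> 'g set \<Rightarrow> 'g list \<Rightarrow> bool" where
  "cay_geodesic G Z vs \<longleftrightarrow> cay_path G Z vs \<and> path_len vs = cay_dist G Z (hd vs) (last vs)"

end

theory Submission
  imports Defs
begin

text \<open>Integrate the discrete 1-form \<open>g dh\<close> along paths in the Cayley graph, where
  \<open>h\<close> is the distance from the start of the geodesic \<open>p\<close> and \<open>g\<close> is the distance to \<open>q\<close>,
  truncated at \<open>r\<close>. Both are 1-Lipschitz, so the integral around a relator loop is at most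
  \<open>M\<^sup>2\<close>; it is invariant under free reduction and conjugation does not change it, so by the
  linear isoperimetric inequality the integral around the loop \<open>q p\<^sup>-\<^sup>1\<close> is \<open>O(\<ell>(q))\<close>.
  It vanishes along \<open>q\<close>, where \<open>g = 0\<close>, while along \<open>p\<close>, where \<open>h\<close> grows at unit speed,
  every vertex farther than \<open>r\<close> from \<open>q\<close> contributes \<open>r/2\<close>. For \<open>r\<close> large compared with
  \<open>K L M\<^sup>2\<close> at most half of the vertices of \<open>p\<^sub>0\<close> can therefore be far from \<open>q\<close>.\<close>

definition trapezoid :: "('g \<Rightarrow> real) \<Rightarrow> ('g \<Rightarrow> real) \<Rightarrow> 'g \<Rightarrow> 'g \<Rightarrow> real" where
  "trapezoid g h x y = (g x + g y) / 2 * (h y - h x)"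

fun line_integral ::
  "('g, 'b) monoid_scheme \<Rightarrow> ('g \<Rightarrow> real) \<Rightarrow> ('g \<Rightarrow> real) \<Rightarrow> 'g \<Rightarrow> 'g list \<Rightarrow> real" where
  "line_integral G g h x [] = 0"
| "line_integral G g h x (z # w) =
     trapezoid g h x (x \<otimes>\<^bsub>G\<^esub> z) + line_integral G g h (x \<otimes>\<^bsub>G\<^esub> z) w"

fun edge_labels :: "('g, 'b) monoid_scheme \<Rightarrow> 'g list \<Rightarrow> 'g list" where
  "edge_labels G (v # u # vs) = (inv\<^bsub>G\<^esub> v \<otimes>\<^bsub>G\<^esub> u) # edge_labels G (u # vs)"
| "edge_labels G _ = []"

definition cayley_lipschitz :: "('g, 'b) monoid_scheme \<Rightarrow> 'g set \<Rightarrow> ('g \<Rightarrow> real) \<Rightarrow> bool" where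
  "cayley_lipschitz G Z f \<longleftrightarrow> (\<forall>x\<in>carrier G. \<forall>z\<in>Z. \<bar>f (x \<otimes>\<^bsub>G\<^esub> z) - f x\<bar> \<le> 1)"

lemma trapezoid_swap: "trapezoid g h y x = - trapezoid g h x y"
  by (simp add: trapezoid_def field_simps)

lemma word_eval_Nil [simp]: "word_eval G [] = \<one>\<^bsub>G\<^esub>"
  by (simp add: word_eval_def)

lemma word_eval_Cons [simp]: "word_eval G (z # w) = z \<otimes>\<^bsub>G\<^esub> word_eval G w"
  by (simp add: word_eval_def)

lemma inv_word_Cons: "inv_word G (z # u) = inv_word G u @ [inv\<^bsub>G\<^esub> z]"
  by (simp add: inv_word_def)

lemma length_inv_word [simp]: "length (inv_word G u) = length u"
  by (simp add: inv_word_def)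

lemma cayley_lipschitz_min_const:
  "cayley_lipschitz G Z f \<Longrightarrow> cayley_lipschitz G Z (\<lambda>x. min c (f x))"
  unfolding cayley_lipschitz_def by (fastforce simp: min_def abs_le_iff)

lemma cayley_lipschitz_Min:
  assumes "finite A" "A \<noteq> {}" "\<forall>a\<in>A. cayley_lipschitz G Z (f a)"
  shows "cayley_lipschitz G Z (\<lambda>x. Min ((\<lambda>a. f a x) ` A))"
  unfolding cayley_lipschitz_def
proof (intro ballI)
  fix x z assume x: "x \<in> carrier G" and z: "z \<in> Z"
  let ?m = "\<lambda>x. Min ((\<lambda>a. f a x) ` A)"
  have "?m y \<in> (\<lambda>a. f a y) ` A" for y using assms(1,2) by (intro Min_in) auto
  then obtain a b where a: "a \<in> A" "?m x = f a x"
    and b: "b \<in> A" "?m (x \<otimes>\<^bsub>G\<^esub> z) = f b (x \<otimes>\<^bsub>G\<^esub> z)"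
    unfolding image_iff by meson
  have "?m (x \<otimes>\<^bsub>G\<^esub> z) \<le> f a (x \<otimes>\<^bsub>G\<^esub> z)" "?m x \<le> f b x"
    using a(1) b(1) assms(1) by auto
  moreover have "\<bar>f a (x \<otimes>\<^bsub>G\<^esub> z) - f a x\<bar> \<le> 1" "\<bar>f b (x \<otimes>\<^bsub>G\<^esub> z) - f b x\<bar> \<le> 1"
    using assms(3) a(1) b(1) x z unfolding cayley_lipschitz_def by auto
  ultimately show "\<bar>?m (x \<otimes>\<^bsub>G\<^esub> z) - ?m x\<bar> \<le> 1" using a(2) b(2) by linarith
qed

context group
begin

lemma word_eval_closed [simp]: "set w \<subseteq> carrier G \<Longrightarrow> word_eval G w \<in> carrier G"
  by (induct w) auto

lemma word_eval_append:
  "set u \<subseteq> carrier G \<Longrightarrow> set w \<subseteq> carrier G \<Longrightarrow>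
   word_eval G (u @ w) = word_eval G u \<otimes> word_eval G w"
  by (induct u) (auto simp: m_assoc)

lemma inv_word_closed: "set u \<subseteq> carrier G \<Longrightarrow> set (inv_word G u) \<subseteq> carrier G"
  by (auto simp: inv_word_def)

lemma word_eval_inv_word:
  assumes "set u \<subseteq> carrier G"
  shows "word_eval G (inv_word G u) = inv (word_eval G u)"
  using assms
proof (induct u)
  case (Cons z u)
  then show ?case
    by (simp add: inv_word_Cons word_eval_append inv_word_closed inv_mult_group)
qed (simp add: inv_word_def)

lemma line_integral_append:
  "x \<in> carrier G \<Longrightarrow> set u \<subseteq> carrier G \<Longrightarrow>
   line_integral G g h x (u @ w) =
     line_integral G g h x u + line_integral G g h (x \<otimes> word_eval G u) w"
  by (induct u arbitrary: x) (auto simp: m_assoc)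

lemma line_integral_inv_word:
  assumes "x \<in> carrier G" "set u \<subseteq> carrier G"
  shows "line_integral G g h (x \<otimes> word_eval G u) (inv_word G u) = - line_integral G g h x u"
  using assms
proof (induct u arbitrary: x)
  case (Cons z u)
  then have zc: "z \<in> carrier G" and uc: "set u \<subseteq> carrier G" by auto
  have end_eq: "x \<otimes> z \<otimes> word_eval G u \<otimes> word_eval G (inv_word G u) = x \<otimes> z"
    using Cons.prems zc uc by (simp add: word_eval_inv_word m_assoc)
  have "line_integral G g h (x \<otimes> word_eval G (z # u)) (inv_word G (z # u))
      = line_integral G g h (x \<otimes> z \<otimes> word_eval G u) (inv_word G u)
        + line_integral G g h (x \<otimes> z) [inv z]"
    using Cons.prems zc uc end_eq
    by (simp add: inv_word_Cons line_integral_append inv_word_closed m_assoc)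
  also have "\<dots> = - line_integral G g h (x \<otimes> z) u + trapezoid g h (x \<otimes> z) x"
    using Cons.hyps[of "x \<otimes> z"] Cons.prems zc uc by (simp add: m_assoc)
  finally show ?case
    by (simp add: trapezoid_swap[of g h "x \<otimes> z" x])
qed (simp add: inv_word_def)

lemma cayley_lipschitz_word:
  assumes "cayley_lipschitz G Z f" "Z \<subseteq> carrier G" "x \<in> carrier G" "set w \<subseteq> Z"
  shows "\<bar>f (x \<otimes> word_eval G w) - f x\<bar> \<le> real (length w)"
  using assms(3,4)
proof (induct w arbitrary: x)
  case (Cons z w)
  have zc: "z \<in> carrier G" and wc: "set w \<subseteq> carrier G" using Cons.prems assms(2) by auto
  have "\<bar>f (x \<otimes> z) - f x\<bar> \<le> 1" using assms(1) Cons.prems unfolding cayley_lipschitz_def by simp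
  moreover have "\<bar>f (x \<otimes> z \<otimes> word_eval G w) - f (x \<otimes> z)\<bar> \<le> real (length w)"
    using Cons zc by simp
  ultimately show ?case using Cons.prems zc wc by (simp add: m_assoc)
qed simp

lemma line_integral_approx:
  assumes lip: "cayley_lipschitz G Z g" "cayley_lipschitz G Z h"
    and Zc: "Z \<subseteq> carrier G" and "x \<in> carrier G" "set w \<subseteq> Z"
  shows "\<bar>line_integral G g h x w - g x * (h (x \<otimes> word_eval G w) - h x)\<bar>
           \<le> (real (length w))\<^sup>2"
  using assms(4,5)
proof (induct w arbitrary: x)
  case (Cons z w)
  define y where "y = x \<otimes> z"
  define e where "e = y \<otimes> word_eval G w"
  have zc: "z \<in> carrier G" and wZ: "set w \<subseteq> Z" and yc: "y \<in> carrier G"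
    using Cons.prems Zc by (auto simp: y_def)
  have e_eq: "x \<otimes> word_eval G (z # w) = e"
    using Cons.prems zc wZ Zc by (auto simp: e_def y_def m_assoc)
  have gy: "\<bar>g y - g x\<bar> \<le> 1" and hy: "\<bar>h y - h x\<bar> \<le> 1"
    using lip Cons.prems unfolding cayley_lipschitz_def y_def by auto
  have he: "\<bar>h e - h y\<bar> \<le> real (length w)"
    unfolding e_def using cayley_lipschitz_word[OF lip(2) Zc yc wZ] .
  have IH: "\<bar>line_integral G g h y w - g y * (h e - h y)\<bar> \<le> (real (length w))\<^sup>2"
    using Cons.hyps[OF yc wZ] by (simp add: e_def)
  have "line_integral G g h x (z # w) - g x * (h e - h x) =
      (g y - g x) * (h y - h x) / 2 + (line_integral G g h y w - g y * (h e - h y))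
      + (g y - g x) * (h e - h y)"
    by (simp add: y_def trapezoid_def field_simps)
  moreover have "\<bar>(g y - g x) * (h y - h x)\<bar> \<le> 1"
    using mult_mono[OF gy hy] by (simp add: abs_mult)
  moreover have "\<bar>(g y - g x) * (h e - h y)\<bar> \<le> real (length w)"
    using mult_mono[OF gy he] by (simp add: abs_mult)
  ultimately have "\<bar>line_integral G g h x (z # w) - g x * (h e - h x)\<bar>
      \<le> 1 / 2 + (real (length w))\<^sup>2 + real (length w)"
    using IH by linarith
  also have "\<dots> \<le> (real (length (z # w)))\<^sup>2"
    by (simp add: power2_eq_square algebra_simps)
  finally show ?case by (simp only: e_eq)
qed simp

lemma line_integral_loop_le:
  assumes "cayley_lipschitz G Z g" "cayley_lipschitz G Z h" "Z \<subseteq> carrier G"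
    and "x \<in> carrier G" "set w \<subseteq> Z" "word_eval G w = \<one>"
  shows "\<bar>line_integral G g h x w\<bar> \<le> (real (length w))\<^sup>2"
  using line_integral_approx[OF assms(1-5)] assms(4,6) by simp

text \<open>The two traversals of the conjugating word cancel.\<close>
lemma line_integral_conj_factor:
  assumes "x \<in> carrier G" "set u \<subseteq> carrier G" "set r \<subseteq> carrier G" "word_eval G r = \<one>"
  shows "line_integral G g h x (conj_factor G (u, r, e)) =
           (if e then 1 else -1) * line_integral G g h (x \<otimes> word_eval G u) r"
proof -
  define y where "y = x \<otimes> word_eval G u"
  define mid where "mid = (if e then r else inv_word G r)"
  have yc: "y \<in> carrier G" using assms by (simp add: y_def)
  have midc: "set mid \<subseteq> carrier G" and mid1: "word_eval G mid = \<one>"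
    using assms inv_word_closed by (auto simp: mid_def word_eval_inv_word)
  have mid_int: "line_integral G g h y mid = (if e then 1 else -1) * line_integral G g h y r"
    using line_integral_inv_word[OF yc assms(3), of g h] assms(4) yc by (simp add: mid_def)
  have "line_integral G g h x (conj_factor G (u, r, e)) =
      line_integral G g h x u + line_integral G g h y mid
      + line_integral G g h (y \<otimes> word_eval G mid) (inv_word G u)"
    using assms midc yc
    by (simp add: conj_factor_def mid_def [symmetric] line_integral_append word_eval_append
        y_def m_assoc)
  also have "line_integral G g h (y \<otimes> word_eval G mid) (inv_word G u) =
      - line_integral G g h x u"
    using mid1 yc line_integral_inv_word[OF assms(1,2)] by (simp add: y_def)
  finally show ?thesis using mid_int by (simp add: y_def)
qed

lemma conj_factor_closed:
  "set u \<subseteq> carrier G \<Longrightarrow> set r \<subseteq> carrier G \<Longrightarrow> set (conj_factor G (u, r, e)) \<subseteq> carrier G"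
  using inv_word_closed by (auto simp: conj_factor_def)

lemma word_eval_conj_factor:
  assumes "set u \<subseteq> carrier G" "set r \<subseteq> carrier G" "word_eval G r = \<one>"
  shows "word_eval G (conj_factor G (u, r, e)) = \<one>"
  using assms inv_word_closed[OF assms(1)] inv_word_closed[OF assms(2)]
  by (simp add: conj_factor_def word_eval_append word_eval_inv_word)

end

locale cayley_graph = group +
  fixes Z :: "'a set"
  assumes gens_closed: "Z \<subseteq> carrier G"
    and gens_inv_closed: "\<forall>z\<in>Z. inv z \<in> Z"
    and generate_gens: "generate G Z = carrier G"
begin

lemma free_red_closed:
  "free_red G Z a b \<Longrightarrow> set a \<subseteq> carrier G \<longleftrightarrow> set b \<subseteq> carrier G"
proof (induct rule: free_red.induct)
  case (1 z xs ys)
  then have "z \<in> carrier G" "inv z \<in> carrier G" using gens_closed by auto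
  then show ?case by auto
qed

lemma line_integral_free_red:
  assumes "free_red G Z a b" "set a \<subseteq> carrier G" "x \<in> carrier G"
  shows "line_integral G g h x a = line_integral G g h x b"
  using assms
proof (induct rule: free_red.induct)
  case (1 z xs ys)
  define y where "y = x \<otimes> word_eval G xs"
  have zc: "z \<in> carrier G" and xs: "set xs \<subseteq> carrier G" and yc: "y \<in> carrier G"
    using 1 gens_closed by (auto simp: y_def)
  have "line_integral G g h y ([z, inv z] @ ys) = line_integral G g h y ys"
    using yc zc trapezoid_swap[of g h "y \<otimes> z" y] by (simp add: m_assoc)
  then show ?case using line_integral_append[OF 1(3) xs] by (simp add: y_def)
qed

lemma line_integral_free_eq:
  assumes "free_eq G Z a b" "set a \<subseteq> carrier G" "x \<in> carrier G"
  shows "line_integral G g h x a = line_integral G g h x b"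
proof -
  have "set b \<subseteq> carrier G \<and> line_integral G g h x a = line_integral G g h x b"
    using assms(1)[unfolded free_eq_def] assms(2)
  proof (induct rule: rtranclp_induct)
    case (step b c)
    then have b: "set b \<subseteq> carrier G" "line_integral G g h x a = line_integral G g h x b"
      by auto
    from step.hyps(2) show ?case
    proof (cases rule: symclpE)
      case base
      then show ?thesis using b free_red_closed line_integral_free_red[OF base b(1) assms(3)]
        by simp
    next
      case sym
      then have "set c \<subseteq> carrier G" using b free_red_closed by blast
      then show ?thesis using b line_integral_free_red[OF sym _ assms(3)] by simp
    qed
  qed simp
  then show ?thesis ..
qed

lemma word_of_generate:
  "a \<in> generate G Z \<Longrightarrow> \<exists>w. set w \<subseteq> Z \<and> word_eval G w = a"
proof (induct rule: generate.induct)
  case one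
  show ?case by (intro exI[of _ "[]"]) simp
next
  case (incl h)
  then show ?case using gens_closed by (intro exI[of _ "[h]"]) auto
next
  case (inv h)
  then show ?case using gens_closed gens_inv_closed by (intro exI[of _ "[inv h]"]) auto
next
  case (eng h1 h2)
  then obtain w1 w2 where "set w1 \<subseteq> Z" "word_eval G w1 = h1" "set w2 \<subseteq> Z" "word_eval G w2 = h2"
    by blast
  then show ?case using gens_closed by (intro exI[of _ "w1 @ w2"]) (auto simp: word_eval_append)
qed

lemma cay_dist_witness:
  assumes "x \<in> carrier G" "y \<in> carrier G"
  obtains w where "set w \<subseteq> Z" "length w = cay_dist G Z x y" "x \<otimes> word_eval G w = y"
proof -
  obtain w where w: "set w \<subseteq> Z" "word_eval G w = inv x \<otimes> y"
    using word_of_generate[of "inv x \<otimes> y"] assms generate_gens by auto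
  then have "x \<otimes> word_eval G w = y" using assms by (simp add: m_assoc [symmetric])
  then have "\<exists>n w. set w \<subseteq> Z \<and> length w = n \<and> x \<otimes> word_eval G w = y" using w by blast
  from LeastI_ex[OF this] obtain v where
    "set v \<subseteq> Z" "length v = cay_dist G Z x y" "x \<otimes> word_eval G v = y"
    unfolding cay_dist_def by blast
  then show ?thesis by (rule that)
qed

lemma cay_dist_le: "set w \<subseteq> Z \<Longrightarrow> x \<otimes> word_eval G w = y \<Longrightarrow> cay_dist G Z x y \<le> length w"
  unfolding cay_dist_def by (rule Least_le) blast

lemma cay_dist_self [simp]: "x \<in> carrier G \<Longrightarrow> cay_dist G Z x x = 0"
  using cay_dist_le[of "[]" x x] by simp

lemma cay_dist_triangle:
  assumes "x \<in> carrier G" "y \<in> carrier G" "t \<in> carrier G"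
  shows "cay_dist G Z x t \<le> cay_dist G Z x y + cay_dist G Z y t"
proof -
  obtain u where u: "set u \<subseteq> Z" "length u = cay_dist G Z x y" "x \<otimes> word_eval G u = y"
    using cay_dist_witness[OF assms(1,2)] .
  obtain v where v: "set v \<subseteq> Z" "length v = cay_dist G Z y t" "y \<otimes> word_eval G v = t"
    using cay_dist_witness[OF assms(2,3)] .
  have "x \<otimes> word_eval G (u @ v) = t"
    using u v gens_closed assms by (auto simp: word_eval_append m_assoc [symmetric])
  then have "cay_dist G Z x t \<le> length (u @ v)" using u v by (intro cay_dist_le) auto
  then show ?thesis using u v by simp
qed

lemma cay_dist_edge:
  assumes "x \<in> carrier G" "z \<in> Z"
  shows "cay_dist G Z x (x \<otimes> z) \<le> 1" "cay_dist G Z (x \<otimes> z) x \<le> 1"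
proof -
  have zc: "z \<in> carrier G" using assms gens_closed by auto
  show "cay_dist G Z x (x \<otimes> z) \<le> 1"
    using cay_dist_le[of "[z]" x "x \<otimes> z"] assms zc by simp
  show "cay_dist G Z (x \<otimes> z) x \<le> 1"
    using cay_dist_le[of "[inv z]" "x \<otimes> z" x] assms zc gens_inv_closed by (simp add: m_assoc)
qed

lemma cayley_lipschitz_cay_dist:
  assumes "t \<in> carrier G"
  shows "cayley_lipschitz G Z (\<lambda>x. real (cay_dist G Z x t))"
    and "cayley_lipschitz G Z (\<lambda>x. real (cay_dist G Z t x))"
proof -
  have "\<bar>real (cay_dist G Z (x \<otimes> z) t) - real (cay_dist G Z x t)\<bar> \<le> 1 \<and>
        \<bar>real (cay_dist G Z t (x \<otimes> z)) - real (cay_dist G Z t x)\<bar> \<le> 1"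
    if x: "x \<in> carrier G" and z: "z \<in> Z" for x z
  proof -
    have xz: "x \<otimes> z \<in> carrier G" using x z gens_closed by auto
    note edge = cay_dist_edge[OF x z]
    have "\<bar>real (cay_dist G Z (x \<otimes> z) t) - real (cay_dist G Z x t)\<bar> \<le> 1"
      using cay_dist_triangle[OF xz x assms] cay_dist_triangle[OF x xz assms] edge by linarith
    moreover have "\<bar>real (cay_dist G Z t (x \<otimes> z)) - real (cay_dist G Z t x)\<bar> \<le> 1"
      using cay_dist_triangle[OF assms x xz] cay_dist_triangle[OF assms xz x] edge by linarith
    ultimately show ?thesis ..
  qed
  then show "cayley_lipschitz G Z (\<lambda>x. real (cay_dist G Z x t))"
    and "cayley_lipschitz G Z (\<lambda>x. real (cay_dist G Z t x))"
    unfolding cayley_lipschitz_def by auto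
qed

lemma inv_word_in_gens: "set u \<subseteq> Z \<Longrightarrow> set (inv_word G u) \<subseteq> Z"
  using gens_inv_closed by (auto simp: inv_word_def)

lemma cay_path_Cons_Cons:
  "cay_path G Z (v # u # vs) \<longleftrightarrow> v \<in> carrier G \<and> inv v \<otimes> u \<in> Z \<and> cay_path G Z (u # vs)"
proof -
  have "(\<forall>i. Suc i < length (v # u # vs) \<longrightarrow>
          inv ((v # u # vs) ! i) \<otimes> (v # u # vs) ! Suc i \<in> Z) \<longleftrightarrow>
        inv v \<otimes> u \<in> Z \<and>
        (\<forall>i. Suc i < length (u # vs) \<longrightarrow> inv ((u # vs) ! i) \<otimes> (u # vs) ! Suc i \<in> Z)"
    by (auto simp: All_less_Suc2 simp del: nth_Cons_Suc)
  then show ?thesis unfolding cay_path_def by auto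
qed

lemma cay_path_nth_closed: "cay_path G Z vs \<Longrightarrow> i < length vs \<Longrightarrow> vs ! i \<in> carrier G"
  unfolding cay_path_def by auto

lemma cay_path_dist_le:
  assumes "cay_path G Z vs" "i \<le> j" "j < length vs"
  shows "cay_dist G Z (vs ! i) (vs ! j) \<le> j - i"
  using assms(2,3)
proof (induct j)
  case (Suc j)
  note closed = cay_path_nth_closed[OF assms(1)]
  show ?case
  proof (cases "i = Suc j")
    case False
    then have ij: "i \<le> j" using Suc.prems by simp
    have edge: "vs ! Suc j = vs ! j \<otimes> (inv (vs ! j) \<otimes> vs ! Suc j)"
      using closed Suc.prems by (simp add: m_assoc [symmetric])
    have "inv (vs ! j) \<otimes> vs ! Suc j \<in> Z" using assms(1) Suc.prems unfolding cay_path_def by simp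
    then have "cay_dist G Z (vs ! j) (vs ! Suc j) \<le> 1"
      using cay_dist_edge(1)[of "vs ! j"] closed Suc.prems by (subst edge) simp
    moreover have "cay_dist G Z (vs ! i) (vs ! Suc j)
        \<le> cay_dist G Z (vs ! i) (vs ! j) + cay_dist G Z (vs ! j) (vs ! Suc j)"
      using cay_dist_triangle closed Suc.prems by simp
    ultimately show ?thesis using Suc ij by simp
  qed (use closed Suc.prems in simp)
qed (use cay_path_nth_closed[OF assms(1)] in simp)

lemma cay_dist_hd_last_le: "cay_path G Z vs \<Longrightarrow> cay_dist G Z (hd vs) (last vs) \<le> path_len vs"
  using cay_path_dist_le[of vs 0 "length vs - 1"]
  by (simp add: cay_path_def hd_conv_nth last_conv_nth path_len_def)

lemma cay_geodesic_dist_hd: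
  assumes "cay_geodesic G Z p" "k < length p"
  shows "cay_dist G Z (hd p) (p ! k) = k"
proof -
  define n where "n = length p - 1"
  have p: "cay_path G Z p" "p \<noteq> []" using assms(1) by (auto simp: cay_geodesic_def cay_path_def)
  have hd: "hd p = p ! 0" and last: "last p = p ! n"
    using p(2) by (simp_all add: hd_conv_nth last_conv_nth n_def)
  have kn: "k \<le> n" "n < length p" using assms(2) p(2) by (auto simp: n_def)
  then have closed: "p ! 0 \<in> carrier G" "p ! k \<in> carrier G" "p ! n \<in> carrier G"
    using cay_path_nth_closed[OF p(1), of 0] cay_path_nth_closed[OF p(1), of k]
      cay_path_nth_closed[OF p(1), of n] p(2) by auto
  have "n = cay_dist G Z (p ! 0) (p ! n)"
    using assms(1) hd last by (simp add: cay_geodesic_def path_len_def n_def)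
  also have "\<dots> \<le> cay_dist G Z (p ! 0) (p ! k) + cay_dist G Z (p ! k) (p ! n)"
    using cay_dist_triangle[OF closed] .
  finally show ?thesis
    using cay_path_dist_le[OF p(1), of 0 k] cay_path_dist_le[OF p(1), of k n] kn hd by simp
qed

lemma length_edge_labels [simp]: "length (edge_labels G vs) = length vs - 1"
  by (induct G vs rule: edge_labels.induct) auto

lemma edge_labels_in_gens: "cay_path G Z vs \<Longrightarrow> set (edge_labels G vs) \<subseteq> Z"
  by (induct vs rule: induct_list012) (auto simp: cay_path_Cons_Cons)

lemma word_eval_edge_labels:
  "cay_path G Z vs \<Longrightarrow> hd vs \<otimes> word_eval G (edge_labels G vs) = last vs"
proof (induct vs rule: induct_list012)
  case (3 v u vs)
  have tail: "cay_path G Z (u # vs)" and vc: "v \<in> carrier G"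
    using 3(3) by (auto simp: cay_path_Cons_Cons)
  have uc: "u \<in> carrier G" and lc: "set (edge_labels G (u # vs)) \<subseteq> carrier G"
    using tail edge_labels_in_gens[OF tail] gens_closed by (auto simp: cay_path_def)
  have "v \<otimes> word_eval G (edge_labels G (v # u # vs)) = u \<otimes> word_eval G (edge_labels G (u # vs))"
    using vc uc lc by (simp add: m_assoc [symmetric])
  then show ?case using 3(2)[OF tail] by simp
qed (auto simp: cay_path_def)

lemma line_integral_edge_labels:
  "cay_path G Z vs \<Longrightarrow>
   line_integral G g h (hd vs) (edge_labels G vs) =
     (\<Sum>i < path_len vs. trapezoid g h (vs ! i) (vs ! Suc i))"
proof (induct vs rule: induct_list012)
  case (3 v u vs)
  have tail: "cay_path G Z (u # vs)" and vc: "v \<in> carrier G" and uc: "u \<in> carrier G"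
    using 3(3) by (auto simp: cay_path_Cons_Cons cay_path_def)
  have "line_integral G g h v (edge_labels G (v # u # vs)) =
      trapezoid g h v u + line_integral G g h u (edge_labels G (u # vs))"
    using vc uc by (simp add: m_assoc [symmetric])
  then show ?case
    using 3(2)[OF tail] by (simp add: path_len_def sum.lessThan_Suc_shift del: sum.lessThan_Suc)
qed (auto simp: path_len_def)

end

locale linear_isoperimetric_presentation = cayley_graph +
  fixes S :: "'a list set" and M :: nat and L :: real
  assumes relators: "\<forall>s\<in>S. set s \<subseteq> Z \<and> word_eval G s = \<one>"
    and relator_length: "\<forall>s\<in>S. length s \<le> M"
    and isoperimetric: "linear_isoperimetric G Z S L"
begin

lemma line_integral_relator_product:
  assumes lip: "cayley_lipschitz G Z g" "cayley_lipschitz G Z h"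
    and fs: "\<forall>(u, r, e) \<in> set fs. set u \<subseteq> Z \<and> r \<in> S" and x: "x \<in> carrier G"
  shows "\<bar>line_integral G g h x (concat (map (conj_factor G) fs))\<bar> \<le> real (length fs) * (real M)\<^sup>2"
  using fs
proof (induct fs)
  case (Cons f fs)
  obtain u r e where f: "f = (u, r, e)" by (cases f)
  have u: "set u \<subseteq> carrier G" and r: "set r \<subseteq> Z" "word_eval G r = \<one>" "length r \<le> M"
    using Cons.prems f relators relator_length gens_closed by auto
  have rc: "set r \<subseteq> carrier G" using r(1) gens_closed by auto
  have "line_integral G g h x (conj_factor G f @ concat (map (conj_factor G) fs)) =
      line_integral G g h x (conj_factor G f) + line_integral G g h x (concat (map (conj_factor G) fs))"
    using line_integral_append[OF x conj_factor_closed[OF u rc]] word_eval_conj_factor[OF u rc r(2)] x f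
    by simp
  moreover have "\<bar>line_integral G g h x (conj_factor G f)\<bar> \<le> (real M)\<^sup>2"
  proof -
    have "\<bar>line_integral G g h x (conj_factor G f)\<bar> = \<bar>line_integral G g h (x \<otimes> word_eval G u) r\<bar>"
      using line_integral_conj_factor[OF x u rc r(2)] f by (simp add: abs_mult)
    also have "\<dots> \<le> (real (length r))\<^sup>2"
      using line_integral_loop_le[OF lip gens_closed _ r(1,2)] x u by simp
    also have "\<dots> \<le> (real M)\<^sup>2" using r(3) by simp
    finally show ?thesis .
  qed
  ultimately show ?case using Cons by (simp add: algebra_simps)
qed simp

lemma line_integral_loop_isoperimetric:
  assumes lip: "cayley_lipschitz G Z g" "cayley_lipschitz G Z h"
    and "x \<in> carrier G" "set w \<subseteq> Z" "word_eval G w = \<one>"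
  shows "\<bar>line_integral G g h x w\<bar> \<le> L * real (length w) * (real M)\<^sup>2"
proof -
  obtain fs where fs: "\<forall>(u, r, e) \<in> set fs. set u \<subseteq> Z \<and> r \<in> S"
    "real (length fs) \<le> L * real (length w)" "free_eq G Z w (concat (map (conj_factor G) fs))"
    using isoperimetric assms(4,5) unfolding linear_isoperimetric_def by blast
  have "line_integral G g h x w = line_integral G g h x (concat (map (conj_factor G) fs))"
    using line_integral_free_eq[OF fs(3) _ assms(3)] assms(4) gens_closed by auto
  also have "\<bar>\<dots>\<bar> \<le> real (length fs) * (real M)\<^sup>2"
    using line_integral_relator_product[OF lip fs(1) assms(3)] .
  also have "\<dots> \<le> L * real (length w) * (real M)\<^sup>2"
    using fs(2) by (simp add: mult_right_mono)
  finally show ?thesis .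
qed

lemma line_integral_paths_diff:
  assumes lip: "cayley_lipschitz G Z g" "cayley_lipschitz G Z h"
    and p: "cay_path G Z p" and q: "cay_path G Z q" and ends: "hd q = hd p" "last q = last p"
  shows "\<bar>(\<Sum>i < path_len q. trapezoid g h (q ! i) (q ! Suc i))
            - (\<Sum>i < path_len p. trapezoid g h (p ! i) (p ! Suc i))\<bar>
         \<le> L * real (path_len q + path_len p) * (real M)\<^sup>2"
proof -
  define lp where "lp = edge_labels G p"
  define lq where "lq = edge_labels G q"
  define w where "w = lq @ inv_word G lp"
  have lpZ: "set lp \<subseteq> Z" and lqZ: "set lq \<subseteq> Z"
    using edge_labels_in_gens p q by (simp_all add: lp_def lq_def)
  then have lpc: "set lp \<subseteq> carrier G" and lqc: "set lq \<subseteq> carrier G" using gens_closed by auto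
  have x: "hd p \<in> carrier G" using p by (auto simp: cay_path_def)
  have "hd p \<otimes> word_eval G lq = hd p \<otimes> word_eval G lp"
    using word_eval_edge_labels[OF p] word_eval_edge_labels[OF q] ends
    by (simp add: lp_def lq_def)
  then have ev: "word_eval G lq = word_eval G lp" using x lpc lqc by simp
  have "word_eval G w = \<one>"
    using ev lpc lqc inv_word_closed[OF lpc] by (simp add: w_def word_eval_append word_eval_inv_word)
  moreover have "set w \<subseteq> Z" using lpZ lqZ inv_word_in_gens by (simp add: w_def)
  ultimately have "\<bar>line_integral G g h (hd p) w\<bar> \<le> L * real (length w) * (real M)\<^sup>2"
    using line_integral_loop_isoperimetric[OF lip x] by blast
  moreover have "line_integral G g h (hd p) w =
      line_integral G g h (hd q) lq - line_integral G g h (hd p) lp"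
    using line_integral_append[OF x lqc] line_integral_inv_word[OF x lpc] ev ends
    by (simp add: w_def)
  moreover have "length w = path_len q + path_len p" by (simp add: w_def lp_def lq_def path_len_def)
  ultimately show ?thesis
    using line_integral_edge_labels[OF p] line_integral_edge_labels[OF q]
    by (simp add: lp_def lq_def)
qed

lemma far_vertices_card_le:
  assumes p: "cay_geodesic G Z p" and q: "cay_path G Z q" and ends: "hd q = hd p" "last q = last p"
  shows "real (card {i. i < path_len p \<and> (\<forall>j < length q. r < cay_dist G Z (p ! i) (q ! j))})
           * real r \<le> 2 * L * real (path_len q + path_len p) * (real M)\<^sup>2"
proof -
  define F where "F = {i. i < path_len p \<and> (\<forall>j < length q. r < cay_dist G Z (p ! i) (q ! j))}"
  define g where "g x = min (real r) (Min ((\<lambda>y. real (cay_dist G Z x y)) ` set q))" for x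
  define h where "h x = real (cay_dist G Z (hd p) x)" for x
  have pP: "cay_path G Z p" using p by (simp add: cay_geodesic_def)
  have qc: "set q \<subseteq> carrier G" "q \<noteq> []" and pc: "hd p \<in> carrier G"
    using pP q by (auto simp: cay_path_def)
  have lip_g: "cayley_lipschitz G Z g"
    unfolding g_def using qc cayley_lipschitz_cay_dist(1)
    by (intro cayley_lipschitz_min_const cayley_lipschitz_Min) auto
  have lip_h: "cayley_lipschitz G Z h"
    unfolding h_def using cayley_lipschitz_cay_dist(2)[OF pc] .
  have g_nonneg: "0 \<le> g x" for x
  proof -
    have "Min ((\<lambda>y. real (cay_dist G Z x y)) ` set q) \<in> (\<lambda>y. real (cay_dist G Z x y)) ` set q"
      using qc by (intro Min_in) auto
    then show ?thesis by (auto simp: g_def)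
  qed
  have g_on_q: "g (q ! j) = 0" if "j < length q" for j
  proof -
    have "q ! j \<in> carrier G" using that qc(1) nth_mem by blast
    moreover have "Min ((\<lambda>y. real (cay_dist G Z (q ! j) y)) ` set q) \<le> real (cay_dist G Z (q ! j) (q ! j))"
      using that by (intro Min_le) auto
    ultimately have "g (q ! j) \<le> 0" by (simp add: g_def min_le_iff_disj)
    then show ?thesis using g_nonneg[of "q ! j"] by simp
  qed
  have g_far: "g (p ! i) = real r" if "i \<in> F" for i
  proof -
    have "Min ((\<lambda>y. real (cay_dist G Z (p ! i) y)) ` set q) \<in> (\<lambda>y. real (cay_dist G Z (p ! i) y)) ` set q"
      using qc by (intro Min_in) auto
    then show ?thesis using that by (auto simp: g_def F_def in_set_conv_nth)
  qed
  have "(\<Sum>i < path_len q. trapezoid g h (q ! i) (q ! Suc i)) = 0"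
    by (intro sum.neutral) (auto simp: trapezoid_def path_len_def g_on_q)
  moreover have "(\<Sum>i < path_len p. trapezoid g h (p ! i) (p ! Suc i)) =
      (\<Sum>i < path_len p. (g (p ! i) + g (p ! Suc i)) / 2)"
    by (intro sum.cong refl) (auto simp: trapezoid_def h_def path_len_def cay_geodesic_dist_hd[OF p])
  ultimately have "(\<Sum>i < path_len p. (g (p ! i) + g (p ! Suc i)) / 2)
      \<le> L * real (path_len q + path_len p) * (real M)\<^sup>2"
    using line_integral_paths_diff[OF lip_g lip_h pP q ends] by simp
  moreover have "real (card F) * (real r / 2) \<le> (\<Sum>i < path_len p. (g (p ! i) + g (p ! Suc i)) / 2)"
  proof -
    have "real (card F) * (real r / 2) = (\<Sum>i\<in>F. real r / 2)" by simp
    also have "\<dots> \<le> (\<Sum>i\<in>F. (g (p ! i) + g (p ! Suc i)) / 2)"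
      by (intro sum_mono) (simp add: g_far g_nonneg)
    also have "\<dots> \<le> (\<Sum>i < path_len p. (g (p ! i) + g (p ! Suc i)) / 2)"
      by (intro sum_mono2) (auto simp: F_def g_nonneg add_nonneg_nonneg)
    finally show ?thesis .
  qed
  ultimately show ?thesis by (simp add: F_def)
qed

lemma near_vertices_card_ge:
  assumes p: "cay_geodesic G Z p" and q: "cay_path G Z q" and ends: "hd q = hd p" "last q = last p"
    and ab: "a \<le> b" "b < length p" and len_q: "real (path_len q) \<le> K * real (b - a)"
    and r: "8 * \<bar>K\<bar> * \<bar>L\<bar> * (real M)\<^sup>2 \<le> real r" "0 < r"
  shows "real (b - a) / 2 \<le>
           real (card {i. a \<le> i \<and> i \<le> b \<and> (\<exists>j < length q. cay_dist G Z (p ! i) (q ! j) \<le> r)})"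
proof -
  define N where "N = {i. a \<le> i \<and> i \<le> b \<and> (\<exists>j < length q. cay_dist G Z (p ! i) (q ! j) \<le> r)}"
  define F where "F = {i. a \<le> i \<and> i < b \<and> (\<forall>j < length q. r < cay_dist G Z (p ! i) (q ! j))}"
  let ?m = "real (b - a)" and ?C = "\<bar>L\<bar> * (real M)\<^sup>2"
  have "path_len p \<le> path_len q"
    using p cay_dist_hd_last_le[OF q] ends by (simp add: cay_geodesic_def)
  then have "L * real (path_len q + path_len p) \<le> \<bar>L\<bar> * (2 * real (path_len q))"
    by (intro order_trans[OF mult_right_mono[OF abs_ge_self] mult_left_mono]) auto
  from mult_right_mono[OF this, of "2 * (real M)\<^sup>2"]
  have "2 * L * real (path_len q + path_len p) * (real M)\<^sup>2 \<le> 4 * real (path_len q) * ?C"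
    by (simp add: algebra_simps)
  also have "\<dots> \<le> 4 * (\<bar>K\<bar> * ?m) * ?C"
    using len_q mult_right_mono[OF abs_ge_self[of K] of_nat_0_le_iff[of "b - a"]]
    by (intro mult_right_mono mult_left_mono) auto
  also have "\<dots> = ?m / 2 * (8 * \<bar>K\<bar> * \<bar>L\<bar> * (real M)\<^sup>2)" by (simp add: algebra_simps)
  also have "\<dots> \<le> ?m / 2 * real r"
    using r(1) by (intro mult_left_mono) auto
  finally have far_bound: "2 * L * real (path_len q + path_len p) * (real M)\<^sup>2 \<le> ?m / 2 * real r" .
  have "card F \<le> card {i. i < path_len p \<and> (\<forall>j < length q. r < cay_dist G Z (p ! i) (q ! j))}"
    using ab by (intro card_mono) (auto simp: F_def path_len_def)
  then have "real (card F) * real r \<le> 2 * L * real (path_len q + path_len p) * (real M)\<^sup>2"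
    using far_vertices_card_le[OF p q ends, of r] mult_right_mono[of _ _ "real r"]
    by (smt (verit) of_nat_0_le_iff of_nat_mono)
  from this far_bound have "real (card F) * real r \<le> ?m / 2 * real r" by (rule order_trans)
  with r(2) have "real (card F) \<le> ?m / 2" by simp
  moreover have "card {a..<b} \<le> card N + card F"
  proof -
    have "{a..<b} \<subseteq> N \<union> F" by (auto simp: N_def F_def)
    moreover have "finite N" "finite F" by (auto simp: N_def F_def)
    ultimately show ?thesis using card_Un_le[of N F] card_mono[of "N \<union> F" "{a..<b}"] by simp
  qed
  ultimately show ?thesis by (simp add: N_def)
qed

end

theorem lemma6p4:
  fixes G :: "('g, 'b) monoid_scheme" and Z :: "'g set" and S :: "'g list set"
    and M :: nat and L :: real
  assumes "group G"
    and "Z \<subseteq> carrier G" and "\<forall>z\<in>Z. inv\<^bsub>G\<^esub> z \<in> Z"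
    and "generate G Z = carrier G"
    and "\<forall>s\<in>S. set s \<subseteq> Z \<and> word_eval G s = \<one>\<^bsub>G\<^esub>"
    and "\<forall>s\<in>S. length s \<le> M"
    and "linear_isoperimetric G Z S L"
  shows "\<forall>K::real. \<exists>(r::nat) (\<epsilon>::real). 0 < \<epsilon> \<and> \<epsilon> \<le> 1 \<and>
     (\<forall>p q a b. cay_geodesic G Z p \<and> a \<le> b \<and> b < length p \<and> b - a > 2 * r \<and>
        cay_path G Z q \<and> hd q = hd p \<and> last q = last p \<and>
        real (path_len q) \<le> K * real (b - a) \<longrightarrow>
        \<epsilon> * real (b - a) \<le>
          real (card {i. a \<le> i \<and> i \<le> b \<and> (\<exists>j < length q. cay_dist G Z (p ! i) (q ! j) \<le> r)}))"
proof
  fix K :: real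
  interpret linear_isoperimetric_presentation G Z S M L
    using assms by (simp add: linear_isoperimetric_presentation_def
        linear_isoperimetric_presentation_axioms_def cayley_graph_def cayley_graph_axioms_def)
  define r :: nat where "r = nat \<lceil>8 * \<bar>K\<bar> * \<bar>L\<bar> * (real M)\<^sup>2\<rceil> + 1"
  have r: "8 * \<bar>K\<bar> * \<bar>L\<bar> * (real M)\<^sup>2 \<le> real r" "0 < r" unfolding r_def by linarith+
  show "\<exists>(r::nat) (\<epsilon>::real). 0 < \<epsilon> \<and> \<epsilon> \<le> 1 \<and>
     (\<forall>p q a b. cay_geodesic G Z p \<and> a \<le> b \<and> b < length p \<and> b - a > 2 * r \<and>
        cay_path G Z q \<and> hd q = hd p \<and> last q = last p \<and>
        real (path_len q) \<le> K * real (b - a) \<longrightarrow>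
        \<epsilon> * real (b - a) \<le>
          real (card {i. a \<le> i \<and> i \<le> b \<and> (\<exists>j < length q. cay_dist G Z (p ! i) (q ! j) \<le> r)}))"
    using near_vertices_card_ge[OF _ _ _ _ _ _ _ r] by (intro exI[of _ r] exI[of _ "1/2"]) auto
qed

end
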